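(* Let $p$ be a prime, $e\ge1$, $q=p^e$, $0\le\ell\le e-1$, $m\ge n$, and let $\varphi_1,\dots,\varphi_m\in\mathbb{F}_q^n$ span $\mathbb{F}_q^n$. Let $\Phi$ be the $n\times m$ matrix with columns $\varphi_1,\dots,\varphi_m$, and for an integer $k\ge0$ let $\Phi^{\dagger_k}=\sigma_k(\Phi)^t$. Let $c\in\mathbb{F}_q$. Then the following are equivalent: (1) $\Phi\Phi^{\dagger_\ell}=cI_n$ (i.e. $\{\varphi_i\}$ is an $\ell$-Galois $c$-tight frame); (2) $G^2=cG$, where $G=\Phi^{\dagger_\ell}\Phi=\big((\varphi_i,\varphi_j)_\ell\big)_{i,j\in[m]}$ is the $\ell$-Galois Gram matrix; (3) $(\Phi^{\dagger_{e-\ell}}\mathbf{x},\Phi^{\dagger_\ell}\mathbf{y})_\ell=c(\mathbf{x},\mathbf{y})_\ell$ for all $\mathbf{x},\mathbf{y}\in\mathbb{F}_q^n$.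
   Context: For an integer $k\ge0$, $\sigma_k(c)=c^{p^k}$ for $c\in\mathbb{F}_q$, applied entrywise to matrices, and for vectors $\mathbf{x},\mathbf{y}$ of the same length $N$, $(\mathbf{x},\mathbf{y})_\ell=\sum_{i=1}^N x_i^{p^\ell}y_i$. $[m]=\{1,\dots,m\}$. *)

theory Defs
  imports "HOL-Analysis.Analysis"
begin

definition sigmaM :: "nat \<Rightarrow> nat \<Rightarrow> 'a::field ^'c^'r \<Rightarrow> 'a^'c^'r" where
  "sigmaM p k A = (\<chi> i j. (A $ i $ j) ^ (p ^ k))"

definition dagger :: "nat \<Rightarrow> nat \<Rightarrow> 'a::field ^'c^'r \<Rightarrow> 'a^'r^'c" where
  "dagger p k A = transpose (sigmaM p k A)"

definition gip :: "nat \<Rightarrow> nat \<Rightarrow> 'a::field ^'n \<Rightarrow> 'a^'n \<Rightarrow> 'a" where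
  "gip p l x y = (\<Sum>i\<in>UNIV. (x $ i) ^ (p ^ l) * y $ i)"

end

(* Write D for Phi^{dagger_l}. Because the columns of Phi span, Phi has a right inverse B, and
   since sigma_l is a ring endomorphism of F_q (Frobenius), sigma_l(B)^t is a left inverse of D.
   (1) <-> (2): G^2 = D (Phi D) Phi, so G^2 = c G = D (c I) Phi is equivalent to Phi D = c I
   after cancelling the two one-sided inverses.
   (1) <-> (3): as a^(p^e) = a on F_q, Phi^{dagger_(e-l)} is the adjoint of Phi for (.,.)_l,
   so the left-hand side of (3) is (x, Phi D y)_l, and (.,.)_l is nondegenerate. *)
theory Submission
  imports Defs "HOL-Number_Theory.Residues"
begin

lemma add_power_CHAR:
  fixes a b :: "'a::comm_semiring_1"
  assumes "prime CHAR('a)"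
  shows "(a + b) ^ CHAR('a) = a ^ CHAR('a) + b ^ CHAR('a)"
proof -
  let ?p = "CHAR('a)"
  have p0: "?p > 0" using assms prime_gt_0_nat by blast
  have "(a + b) ^ ?p = (\<Sum>k\<le>?p. of_nat (?p choose k) * a ^ k * b ^ (?p - k))"
    by (rule binomial_ring)
  also have "\<dots> = (\<Sum>k\<in>{0, ?p}. of_nat (?p choose k) * a ^ k * b ^ (?p - k))"
  proof (rule sum.mono_neutral_right)
    show "\<forall>k\<in>{..?p} - {0, ?p}. of_nat (?p choose k) * a ^ k * b ^ (?p - k) = 0"
    proof
      fix k assume "k \<in> {..?p} - {0, ?p}"
      then have "?p dvd (?p choose k)" using assms by (intro dvd_choose_prime) auto
      then have "(of_nat (?p choose k) :: 'a) = 0"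
        by (simp only: of_nat_eq_0_iff_char_dvd)
      then show "of_nat (?p choose k) * a ^ k * b ^ (?p - k) = 0" by simp
    qed
  qed auto
  also have "\<dots> = a ^ ?p + b ^ ?p" using p0 by (simp add: add.commute)
  finally show ?thesis .
qed

lemma add_power_CHAR_power:
  fixes a b :: "'a::comm_semiring_1"
  assumes "prime CHAR('a)"
  shows "(a + b) ^ (CHAR('a) ^ k) = a ^ (CHAR('a) ^ k) + b ^ (CHAR('a) ^ k)"
proof (induction k)
  case (Suc k)
  then show ?case
    by (simp only: power_Suc2 power_mult add_power_CHAR[OF assms])
qed simp

lemma sum_power_CHAR_power:
  fixes f :: "'b \<Rightarrow> 'a::comm_semiring_1"
  assumes "prime CHAR('a)"
  shows "(sum f A) ^ (CHAR('a) ^ k) = (\<Sum>x\<in>A. f x ^ (CHAR('a) ^ k))"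
proof (induction A rule: infinite_finite_induct)
  case (insert x F)
  then show ?case by (simp add: add_power_CHAR_power[OF assms])
qed (use assms prime_gt_0_nat in \<open>simp_all add: zero_power\<close>)

lemma prime_CHAR_finite_field: "prime CHAR('a::{field,finite})"
  using prime_CHAR_semidom finite_imp_CHAR_pos[where 'a='a] by simp

lemma CHAR_eq_prime_of_CARD:
  assumes "prime p" and "CARD('a::{field,finite}) = p ^ e"
  shows "CHAR('a) = p"
proof -
  have "CHAR('a) dvd p ^ e" using CHAR_dvd_CARD[where 'a='a] assms(2) by simp
  then have "CHAR('a) dvd p" using prime_CHAR_finite_field[where 'a='a] prime_dvd_power by blast
  then show ?thesis
    using prime_CHAR_finite_field[where 'a='a] assms(1) by (simp add: primes_dvd_imp_eq)
qed

text \<open>Lagrange's theorem in the multiplicative group \<open>UNIV - {0}\<close>. The library's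
  \<open>finite_field_power_card_eq_same\<close> only covers types of sort \<open>finite_field\<close>.\<close>
lemma finite_field_power_CARD:
  fixes x :: "'a::{field,finite}"
  shows "x ^ CARD('a) = x"
proof (cases "x = 0")
  case False
  define G where "G = \<lparr>carrier = UNIV - {0::'a}, monoid.mult = (*), one = 1::'a\<rparr>"
  have "Group.group G"
    unfolding G_def by (rule groupI) (auto simp: Bex_def intro: exI[of _ "inverse _"])
  moreover have "x [^]\<^bsub>G\<^esub> n = x ^ n" for n
    by (induction n) (simp_all add: G_def)
  ultimately have "x ^ (CARD('a) - 1) = 1"
    using group.pow_order_eq_1[of G x] False by (simp add: order_def G_def card_Diff_singleton)
  moreover have "CARD('a) = Suc (CARD('a) - 1)"
    using finite_UNIV_card_ge_0[where 'a='a] by simp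
  ultimately show ?thesis by (metis mult_1 power_Suc2)
qed (use finite_UNIV_card_ge_0[where 'a='a] in simp)

lemma sigmaM_matrix_mult:
  fixes A :: "'a::field ^'m::finite ^'n" and B :: "'a ^'k ^'m"
  assumes "prime CHAR('a)"
  shows "sigmaM CHAR('a) k (A ** B) = sigmaM CHAR('a) k A ** sigmaM CHAR('a) k B"
  by (simp add: sigmaM_def matrix_matrix_mult_def sum_power_CHAR_power[OF assms]
      power_mult_distrib vec_eq_iff)

lemma sigmaM_mat_1:
  assumes "p > 0"
  shows "sigmaM p k (mat 1 :: 'a::field ^'n^'n) = mat 1"
  using assms by (simp add: sigmaM_def mat_def vec_eq_iff zero_power)

lemma dagger_left_inverse:
  fixes A :: "'a::field ^'m::finite ^'n::finite" and B :: "'a ^'n ^'m"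
  assumes "prime CHAR('a)" and "A ** B = mat 1"
  shows "transpose (sigmaM CHAR('a) k B) ** dagger CHAR('a) k A = mat 1"
proof -
  have "transpose (sigmaM CHAR('a) k B) ** dagger CHAR('a) k A
      = transpose (sigmaM CHAR('a) k (A ** B))"
    by (simp add: dagger_def matrix_transpose_mul sigmaM_matrix_mult[OF assms(1)])
  also have "\<dots> = mat 1"
    using assms prime_gt_0_nat by (simp add: sigmaM_mat_1)
  finally show ?thesis .
qed

lemma matrix_mult_mat_middle:
  fixes A :: "'a::comm_semiring_1 ^'m::finite ^'n" and B :: "'a ^'k ^'m"
  shows "A ** mat c ** B = (\<chi> i j. c * (A ** B) $ i $ j)"
proof -
  have "A ** mat c = (\<chi> i j. A $ i $ j * c)"
    by (simp add: matrix_matrix_mult_def mat_def vec_eq_iff if_distrib if_distribR sum.delta'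
        cong: if_cong)
  then show ?thesis
    by (simp add: matrix_matrix_mult_def vec_eq_iff sum_distrib_left mult_ac)
qed

lemma mult_eq_mat_iff_square_eq:
  fixes Phi :: "'a::comm_ring_1 ^'m::finite ^'n::finite" and D :: "'a ^'n ^'m"
  assumes PB: "Phi ** B = mat 1" and LD: "L ** D = mat 1"
  shows "Phi ** D = mat c \<longleftrightarrow> (D ** Phi) ** (D ** Phi) = (\<chi> i j. c * (D ** Phi) $ i $ j)"
proof
  assume tight: "Phi ** D = mat c"
  have "(D ** Phi) ** (D ** Phi) = D ** (Phi ** D) ** Phi" by (simp add: matrix_mul_assoc)
  then show "(D ** Phi) ** (D ** Phi) = (\<chi> i j. c * (D ** Phi) $ i $ j)"
    by (simp add: tight flip: matrix_mult_mat_middle)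
next
  assume square: "(D ** Phi) ** (D ** Phi) = (\<chi> i j. c * (D ** Phi) $ i $ j)"
  have "Phi ** D = (L ** D) ** (Phi ** D) ** (Phi ** B)" by (simp add: LD PB)
  also have "\<dots> = L ** ((D ** Phi) ** (D ** Phi)) ** B" by (simp add: matrix_mul_assoc)
  also have "\<dots> = L ** (D ** mat c ** Phi) ** B" by (simp add: square matrix_mult_mat_middle)
  also have "\<dots> = (L ** D) ** mat c ** (Phi ** B)" by (simp add: matrix_mul_assoc)
  also have "\<dots> = mat c" by (simp add: LD PB)
  finally show "Phi ** D = mat c" .
qed

lemma gip_axis_left:
  fixes v :: "'a::field ^'n::finite"
  assumes "p > 0"
  shows "gip p l (axis i 1) v = v $ i"
  using assms
  by (simp add: gip_def axis_def if_distrib if_distribR zero_power sum.delta cong: if_cong)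

lemma gip_mat_right:
  fixes x y :: "'a::field ^'n::finite"
  shows "gip p l x (mat c *v y) = c * gip p l x y"
proof -
  have "mat c *v y = c *s y"
    by (simp add: matrix_vector_mult_def mat_def vec_eq_iff if_distrib if_distribR sum.delta'
        cong: if_cong)
  then show ?thesis by (simp add: gip_def sum_distrib_left mult_ac)
qed

lemma gip_right_eq_iff:
  fixes u v :: "'a::field ^'n::finite"
  assumes "p > 0"
  shows "(\<forall>x. gip p l x u = gip p l x v) \<longleftrightarrow> u = v"
proof
  assume "\<forall>x. gip p l x u = gip p l x v"
  then have "u $ i = v $ i" for i by (metis gip_axis_left[OF assms])
  then show "u = v" by (simp add: vec_eq_iff)
qed simp

lemma gip_dagger_adjoint:
  fixes Phi :: "'a::{field,finite} ^'m::finite ^'n::finite" and x :: "'a^'n" and w :: "'a^'m"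
  assumes "CARD('a) = CHAR('a) ^ e" and "l \<le> e"
  shows "gip CHAR('a) l (dagger CHAR('a) (e - l) Phi *v x) w = gip CHAR('a) l x (Phi *v w)"
proof -
  let ?p = "CHAR('a)"
  have "?p ^ (e - l) * ?p ^ l = CARD('a)"
    using assms by (simp flip: power_add)
  then have frobenius_inverse: "(a ^ (?p ^ (e - l))) ^ (?p ^ l) = a" for a :: 'a
    by (simp flip: power_mult add: finite_field_power_CARD)
  have "((dagger ?p (e - l) Phi *v x) $ j) ^ (?p ^ l) = (\<Sum>i\<in>UNIV. Phi $ i $ j * x $ i ^ (?p ^ l))"
    for j
    by (simp add: dagger_def sigmaM_def transpose_def matrix_vector_mult_def power_mult_distrib
        sum_power_CHAR_power[OF prime_CHAR_finite_field] frobenius_inverse)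
  then have "gip ?p l (dagger ?p (e - l) Phi *v x) w
      = (\<Sum>j\<in>UNIV. (\<Sum>i\<in>UNIV. Phi $ i $ j * x $ i ^ (?p ^ l)) * w $ j)"
    by (simp add: gip_def)
  also have "\<dots> = (\<Sum>i\<in>UNIV. x $ i ^ (?p ^ l) * (\<Sum>j\<in>UNIV. Phi $ i $ j * w $ j))"
    unfolding sum_distrib_right sum_distrib_left by (subst sum.swap) (simp add: mult_ac)
  also have "\<dots> = gip ?p l x (Phi *v w)"
    by (simp add: gip_def matrix_vector_mult_def)
  finally show ?thesis .
qed

lemma mult_eq_mat_iff_gip:
  fixes Phi :: "'a::{field,finite} ^'m::finite ^'n::finite" and D :: "'a ^'n ^'m"
  assumes "CARD('a) = CHAR('a) ^ e" and "l \<le> e"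
  shows "(\<forall>x y :: 'a^'n. gip CHAR('a) l (dagger CHAR('a) (e - l) Phi *v x) (D *v y)
            = c * gip CHAR('a) l x y)
         \<longleftrightarrow> Phi ** D = mat c"
proof -
  have "CHAR('a) > 0" using prime_CHAR_finite_field[where 'a='a] prime_gt_0_nat by blast
  have "(\<forall>x y :: 'a^'n. gip CHAR('a) l (dagger CHAR('a) (e - l) Phi *v x) (D *v y)
            = c * gip CHAR('a) l x y)
      \<longleftrightarrow> (\<forall>y x. gip CHAR('a) l x ((Phi ** D) *v y) = gip CHAR('a) l x (mat c *v y))"
    by (auto simp: gip_dagger_adjoint[OF assms] gip_mat_right matrix_vector_mul_assoc)
  also have "\<dots> \<longleftrightarrow> (\<forall>y. (Phi ** D) *v y = mat c *v y)"
    by (simp add: gip_right_eq_iff[OF \<open>CHAR('a) > 0\<close>])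
  also have "\<dots> \<longleftrightarrow> Phi ** D = mat c"
    by (simp add: matrix_eq)
  finally show ?thesis .
qed

theorem mainTheorem3:
  fixes p e l :: nat
    and Phi :: "'a::{field,finite} ^'m::finite ^'n::finite"
    and c :: 'a
  assumes "prime p" and "e \<ge> 1" and "CARD('a) = p ^ e"
    and "l \<le> e - 1"
    and "CARD('m) \<ge> CARD('n)"
    and "vec.span (range (\<lambda>j. column j Phi)) = UNIV"
  shows "(Phi ** dagger p l Phi = mat c
           \<longleftrightarrow> (dagger p l Phi ** Phi) ** (dagger p l Phi ** Phi)
                 = (\<chi> i j. c * (dagger p l Phi ** Phi) $ i $ j))
       \<and> ((dagger p l Phi ** Phi) ** (dagger p l Phi ** Phi)
                 = (\<chi> i j. c * (dagger p l Phi ** Phi) $ i $ j)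
           \<longleftrightarrow> (\<forall>x y :: 'a^'n. gip p l (dagger p (e - l) Phi *v x) (dagger p l Phi *v y)
                                = c * gip p l x y))"
proof -
  have char: "CHAR('a) = p" using CHAR_eq_prime_of_CARD assms(1,3) .
  have "l \<le> e" using assms(4) by linarith
  have "columns Phi = range (\<lambda>j. column j Phi)" by (auto simp: columns_def)
  then obtain B :: "'a^'n^'m" where right_inverse: "Phi ** B = mat 1"
    using matrix_right_invertible_span_columns[of Phi] assms(6) by auto
  have "transpose (sigmaM p l B) ** dagger p l Phi = mat 1"
    using dagger_left_inverse[OF prime_CHAR_finite_field right_inverse] by (simp add: char)
  then have gram: "Phi ** dagger p l Phi = mat c
      \<longleftrightarrow> (dagger p l Phi ** Phi) ** (dagger p l Phi ** Phi)
            = (\<chi> i j. c * (dagger p l Phi ** Phi) $ i $ j)"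
    by (rule mult_eq_mat_iff_square_eq[OF right_inverse])
  have "(\<forall>x y :: 'a^'n. gip p l (dagger p (e - l) Phi *v x) (dagger p l Phi *v y)
            = c * gip p l x y)
      \<longleftrightarrow> Phi ** dagger p l Phi = mat c"
    using mult_eq_mat_iff_gip[of e l Phi] assms(3) \<open>l \<le> e\<close> by (simp add: char)
  with gram show ?thesis by blast
qed

end
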